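(* Let $\omega_a,\omega_c,\kappa,\lambda>0$ and $N>0$, and assume $4\lambda^2\neq\omega_a\omega_c\big(1+\kappa^2/\omega_c^2\big)$. Define the real $4\times4$ matrices $$A=\begin{pmatrix}-\kappa&\omega_c&0&0\\-\omega_c&-\kappa&-2\sqrt2\,\lambda&0\\0&0&0&-\omega_a\\ \sqrt2\,\lambda&0&\omega_a&0\end{pmatrix},\qquad D=\frac{\kappa}{N}\begin{pmatrix}1&0&0&0\\0&1&0&0\\0&0&0&0\\0&0&0&0\end{pmatrix}.$$ Then every real symmetric $4\times 4$ matrix $V$ satisfying the Lyapunov equation $AV+VA^{T}=-D$ satisfies $$\frac12\big(V_{11}+V_{22}\big)-\frac{1}{2N}=\frac{1}{2N}\,\frac{\lambda^2}{\omega_a\omega_c-\dfrac{4\lambda^2}{1+\kappa^2/\omega_c^2}}.$$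
   Context: $A$ is the linearization of the mean-field dynamics of the dissipative Kerr quantum Rabi model around the normal phase in the variables $(\delta Q,\delta P,\delta X,\delta Y)$, $D$ is the vacuum-noise diffusion matrix acting on the cavity quadratures, and $V$ is the steady-state covariance matrix; the quantity $\frac12(V_{11}+V_{22})-\frac1{2N}$ is the normal-phase photon-number fluctuation $\langle\delta\alpha^\dagger\delta\alpha\rangle$. *)

theory Defs
  imports "HOL-Analysis.Analysis"
begin

text \<open>Real 4x4 matrices as real^4^4, built row by row with the library's
  vector construction; entry (k,l) of the paper is M $ k $ l for k,l in 1..4.\<close>

definition kerrA :: "real \<Rightarrow> real \<Rightarrow> real \<Rightarrow> real \<Rightarrow> real ^ 4 ^ 4" where
  "kerrA wa wc kap lam = vector
     [vector [-kap, wc, 0, 0],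
      vector [-wc, -kap, -2 * sqrt 2 * lam, 0],
      vector [0, 0, 0, -wa],
      vector [sqrt 2 * lam, 0, wa, 0]]"

definition kerrD :: "real \<Rightarrow> real \<Rightarrow> real ^ 4 ^ 4" where
  "kerrD kap N = (kap / N) *\<^sub>R vector
     [vector [1, 0, 0, 0],
      vector [0, 1, 0, 0],
      vector [0, 0, 0, 0],
      vector [0, 0, 0, 0]]"

lemma kerrA_check: "kerrA a c k l $ 2 $ 3 = -2 * sqrt 2 * l" "kerrA a c k l $ 4 $ 1 = sqrt 2 * l"
  "kerrA a c k l $ 4 $ 3 = a"
  by (simp_all add: kerrA_def vector_def)

end

theory Submission
  imports Defs
begin

text \<open>The Lyapunov equation is a linear system for the entries of the symmetric V.
  Its entries (3,3) and (4,4) force V34 = V14 = 0. Computing kap * wc * V24 in two ways,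
  from the entries (1,4) and (2,4), ties V11 to V13; the sum of the entries (1,1) and (2,2)
  expresses the trace V11 + V22 through V13; and the entry (1,2) then determines V13.
  The nondegeneracy hypothesis says precisely that the coefficient of V13 in this last
  equation does not vanish.\<close>

lemma lyapunov_operator_nth:
  fixes A V :: "'a::comm_semiring_1 ^ 'n ^ 'n"
  shows "(A ** V + V ** transpose A) $ i $ j = (\<Sum>k\<in>UNIV. A $ i $ k * V $ k $ j + V $ i $ k * A $ j $ k)"
  by (simp add: matrix_matrix_mult_def transpose_def sum.distrib)

lemma kerrA_nth:
  "kerrA wa wc kap lam $ 1 $ 1 = -kap" "kerrA wa wc kap lam $ 1 $ 2 = wc"
  "kerrA wa wc kap lam $ 1 $ 3 = 0" "kerrA wa wc kap lam $ 1 $ 4 = 0"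
  "kerrA wa wc kap lam $ 2 $ 1 = -wc" "kerrA wa wc kap lam $ 2 $ 2 = -kap"
  "kerrA wa wc kap lam $ 2 $ 3 = -2 * sqrt 2 * lam" "kerrA wa wc kap lam $ 2 $ 4 = 0"
  "kerrA wa wc kap lam $ 3 $ 1 = 0" "kerrA wa wc kap lam $ 3 $ 2 = 0"
  "kerrA wa wc kap lam $ 3 $ 3 = 0" "kerrA wa wc kap lam $ 3 $ 4 = -wa"
  "kerrA wa wc kap lam $ 4 $ 1 = sqrt 2 * lam" "kerrA wa wc kap lam $ 4 $ 2 = 0"
  "kerrA wa wc kap lam $ 4 $ 3 = wa" "kerrA wa wc kap lam $ 4 $ 4 = 0"
  by (simp_all add: kerrA_def vector_def)

lemma kerrD_nth:
  "kerrD kap N $ 1 $ 1 = kap / N" "kerrD kap N $ 2 $ 2 = kap / N"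
  "kerrD kap N $ 1 $ 2 = 0" "kerrD kap N $ 3 $ 3 = 0" "kerrD kap N $ 4 $ 4 = 0"
  "kerrD kap N $ 1 $ 3 = 0" "kerrD kap N $ 1 $ 4 = 0" "kerrD kap N $ 2 $ 4 = 0"
  by (simp_all add: kerrD_def vector_def)

lemma kerr_lyapunov_equations:
  fixes wa wc kap lam N :: real and V :: "real ^ 4 ^ 4"
  defines "s \<equiv> sqrt 2 * lam"
  assumes "transpose V = V"
    and "kerrA wa wc kap lam ** V + V ** transpose (kerrA wa wc kap lam) = - kerrD kap N"
  shows "2 * (wc * V$1$2 - kap * V$1$1) = - kap / N"
    and "2 * (- wc * V$1$2 - kap * V$2$2 - 2 * s * V$2$3) = - kap / N"
    and "wc * (V$2$2 - V$1$1) - 2 * kap * V$1$2 - 2 * s * V$1$3 = 0"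
    and "wa * V$3$4 = 0"
    and "s * V$1$4 + wa * V$3$4 = 0"
    and "wc * V$2$3 - kap * V$1$3 - wa * V$1$4 = 0"
    and "wc * V$2$4 - kap * V$1$4 + s * V$1$1 + wa * V$1$3 = 0"
    and "- wc * V$1$4 - kap * V$2$4 - 2 * s * V$3$4 + s * V$1$2 + wa * V$2$3 = 0"
proof -
  have sym: "V $ j $ i = V $ i $ j" for i j
    using arg_cong[OF assms(2), of "\<lambda>M. M $ i $ j"] by (simp add: transpose_def)
  have entry: "(\<Sum>k\<in>UNIV. kerrA wa wc kap lam $ i $ k * V $ k $ j + V $ i $ k * kerrA wa wc kap lam $ j $ k)
      = - kerrD kap N $ i $ j" for i j
    using arg_cong[OF assms(3), of "\<lambda>M. M $ i $ j"]
    by (simp only: lyapunov_operator_nth vector_uminus_component)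
  note simps = sum_4 kerrA_nth kerrD_nth sym[of 1 2] sym[of 1 3] sym[of 1 4] sym[of 2 3]
    sym[of 2 4] sym[of 3 4] s_def algebra_simps
  show "2 * (wc * V$1$2 - kap * V$1$1) = - kap / N"
    using entry[of 1 1] by (simp add: simps)
  show "2 * (- wc * V$1$2 - kap * V$2$2 - 2 * s * V$2$3) = - kap / N"
    using entry[of 2 2] by (simp add: simps)
  show "wc * (V$2$2 - V$1$1) - 2 * kap * V$1$2 - 2 * s * V$1$3 = 0"
    using entry[of 1 2] by (simp add: simps)
  show "wa * V$3$4 = 0"
    using entry[of 3 3] by (simp add: simps)
  show "s * V$1$4 + wa * V$3$4 = 0"
    using entry[of 4 4] by (simp add: simps)
  show "wc * V$2$3 - kap * V$1$3 - wa * V$1$4 = 0"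
    using entry[of 1 3] by (simp add: simps)
  show "wc * V$2$4 - kap * V$1$4 + s * V$1$1 + wa * V$1$3 = 0"
    using entry[of 1 4] by (simp add: simps)
  show "- wc * V$1$4 - kap * V$2$4 - 2 * s * V$3$4 + s * V$1$2 + wa * V$2$3 = 0"
    using entry[of 2 4] by (simp add: simps)
qed

lemma lyapunov_normal_phase_elimination:
  fixes wa wc kap s N v11 v12 v13 v14 v22 v23 v24 v34 :: real
  assumes "wa \<noteq> 0" "kap \<noteq> 0" "s \<noteq> 0"
    and eq11: "2 * (wc * v12 - kap * v11) = - kap / N"
    and eq22: "2 * (- wc * v12 - kap * v22 - 2 * s * v23) = - kap / N"
    and eq12: "wc * (v22 - v11) - 2 * kap * v12 - 2 * s * v13 = 0"
    and eq33: "wa * v34 = 0"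
    and eq44: "s * v14 + wa * v34 = 0"
    and eq13: "wc * v23 - kap * v13 - wa * v14 = 0"
    and eq14: "wc * v24 - kap * v14 + s * v11 + wa * v13 = 0"
    and eq24: "- wc * v14 - kap * v24 - 2 * s * v34 + s * v12 + wa * v23 = 0"
  shows "wc * (v11 + v22) + 2 * s * v13 = wc / N"
    and "(wa * (wc\<^sup>2 + kap\<^sup>2) - 2 * s\<^sup>2 * wc) * v13 = - s * (wc\<^sup>2 + kap\<^sup>2) / (4 * N)"
proof -
  have "v34 = 0" using eq33 \<open>wa \<noteq> 0\<close> by simp
  moreover have "v14 = 0" using eq44 \<open>v34 = 0\<close> \<open>s \<noteq> 0\<close> by simp
  ultimately have reduced13: "wc * v23 - kap * v13 = 0"
    and reduced14: "wc * v24 + s * v11 + wa * v13 = 0"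
    and reduced24: "kap * v24 - s * v12 - wa * v23 = 0"
    using eq13 eq14 eq24 by simp_all
  have reduced11: "wc * v12 - kap * v11 + kap / (2 * N) = 0"
    using eq11 by simp
  have "kap * (2 * s * v11 + 2 * wa * v13 - s / (2 * N))
      = kap * (wc * v24 + s * v11 + wa * v13) - wc * (kap * v24 - s * v12 - wa * v23)
        - s * (wc * v12 - kap * v11 + kap / (2 * N)) - wa * (wc * v23 - kap * v13)"
    by (simp add: algebra_simps)
  also have "\<dots> = 0"
    using reduced11 reduced13 reduced14 reduced24 by simp
  finally have v11_via_v13: "2 * s * v11 + 2 * wa * v13 - s / (2 * N) = 0"
    using \<open>kap \<noteq> 0\<close> by simp
  have "kap * (wc * (v11 + v22) + 2 * s * v13 - wc / N)
      = - wc / 2 * (2 * (wc * v12 - kap * v11) + kap / N)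
        - wc / 2 * (2 * (- wc * v12 - kap * v22 - 2 * s * v23) + kap / N)
        - 2 * s * (wc * v23 - kap * v13)"
    by (simp add: algebra_simps)
  also have "\<dots> = 0"
    using eq11 eq22 reduced13 by simp
  finally show trace: "wc * (v11 + v22) + 2 * s * v13 = wc / N"
    using \<open>kap \<noteq> 0\<close> by simp
  have "2 * ((wa * (wc\<^sup>2 + kap\<^sup>2) - 2 * s\<^sup>2 * wc) * v13 + s * (wc\<^sup>2 + kap\<^sup>2) / (4 * N))
      = s * wc * (wc * (v22 - v11) - 2 * kap * v12 - 2 * s * v13)
        - s * wc * (wc * (v11 + v22) + 2 * s * v13 - wc / N)
        + (wc\<^sup>2 + kap\<^sup>2) * (2 * s * v11 + 2 * wa * v13 - s / (2 * N))
        + 2 * kap * s * (wc * v12 - kap * v11 + kap / (2 * N))"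
    by (simp add: algebra_simps power2_eq_square add_divide_distrib)
  also have "\<dots> = 0"
    using eq12 trace v11_via_v13 reduced11 by simp
  finally show "(wa * (wc\<^sup>2 + kap\<^sup>2) - 2 * s\<^sup>2 * wc) * v13 = - s * (wc\<^sup>2 + kap\<^sup>2) / (4 * N)"
    by simp
qed

lemma lyapunov_normal_phase_photon_number:
  fixes wc kap s N M v11 v13 v22 :: real
  assumes "wc \<noteq> 0" "N \<noteq> 0" "M \<noteq> 0"
    and trace: "wc * (v11 + v22) + 2 * s * v13 = wc / N"
    and coherence: "M * v13 = - s * (wc\<^sup>2 + kap\<^sup>2) / (4 * N)"
  shows "(v11 + v22) / 2 - 1 / (2 * N) = s\<^sup>2 * (wc\<^sup>2 + kap\<^sup>2) / (4 * N * M * wc)"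
proof -
  have "(v11 + v22) / 2 - 1 / (2 * N) = - s * v13 / wc"
    using trace assms(1,2) by (simp add: field_simps)
  moreover have "v13 = - s * (wc\<^sup>2 + kap\<^sup>2) / (4 * N * M)"
    using coherence assms(2,3) by (simp add: field_simps)
  ultimately show ?thesis
    by (simp add: power2_eq_square)
qed

theorem mainTheorem2:
  fixes wa wc kap lam N :: real and V :: "real ^ 4 ^ 4"
  assumes "wa > 0" "wc > 0" "kap > 0" "lam > 0" "N > 0"
    and "4 * lam\<^sup>2 \<noteq> wa * wc * (1 + kap\<^sup>2 / wc\<^sup>2)"
    and "transpose V = V"
    and "kerrA wa wc kap lam ** V + V ** transpose (kerrA wa wc kap lam) = - kerrD kap N"
  shows "(V $ 1 $ 1 + V $ 2 $ 2) / 2 - 1 / (2 * N)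
         = 1 / (2 * N) * (lam\<^sup>2 / (wa * wc - 4 * lam\<^sup>2 / (1 + kap\<^sup>2 / wc\<^sup>2)))"
proof -
  define s where "s = sqrt 2 * lam"
  define M where "M = wa * (wc\<^sup>2 + kap\<^sup>2) - 2 * s\<^sup>2 * wc"
  have s2: "s\<^sup>2 = 2 * lam\<^sup>2"
    by (simp add: s_def power_mult_distrib)
  have "s \<noteq> 0"
    using assms(4) by (simp add: s_def)
  then have trace: "wc * (V$1$1 + V$2$2) + 2 * s * V$1$3 = wc / N"
    and coherence: "M * V$1$3 = - s * (wc\<^sup>2 + kap\<^sup>2) / (4 * N)"
    using lyapunov_normal_phase_elimination[OF _ _ _ kerr_lyapunov_equations[OF assms(7,8)]] assms(1,3)
    unfolding s_def M_def by auto
  have "wc\<^sup>2 + kap\<^sup>2 > 0"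
    using assms(2) by (simp add: add_pos_nonneg)
  then have denominator: "wa * wc - 4 * lam\<^sup>2 / (1 + kap\<^sup>2 / wc\<^sup>2) = wc * M / (wc\<^sup>2 + kap\<^sup>2)"
    unfolding M_def s2 using assms(2) by (simp add: field_simps power2_eq_square)
  have "1 + kap\<^sup>2 / wc\<^sup>2 > 0"
    by (simp add: add_pos_nonneg)
  then have "wa * wc - 4 * lam\<^sup>2 / (1 + kap\<^sup>2 / wc\<^sup>2) \<noteq> 0"
    using assms(6) by (simp add: field_simps)
  then have "M \<noteq> 0"
    unfolding denominator by simp
  have "(V$1$1 + V$2$2) / 2 - 1 / (2 * N) = s\<^sup>2 * (wc\<^sup>2 + kap\<^sup>2) / (4 * N * M * wc)"
    using lyapunov_normal_phase_photon_number[OF _ _ \<open>M \<noteq> 0\<close> trace coherence] assms(2,5) by simp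
  also have "\<dots> = 1 / (2 * N) * (lam\<^sup>2 / (wa * wc - 4 * lam\<^sup>2 / (1 + kap\<^sup>2 / wc\<^sup>2)))"
    unfolding denominator s2 using \<open>M \<noteq> 0\<close> \<open>wc\<^sup>2 + kap\<^sup>2 > 0\<close> assms(2,5) by (simp add: field_simps)
  finally show ?thesis .
qed

end
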